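(* For $k\in(0,\infty)$ let $\mathcal{T}_{(k)}$ be the Weibull law with tail function $\overline{F}_{(k)}(x)=e^{-x^k}$, $x\in[0,\infty)$. Each of the following statements is equivalent to $k\leq1$: (a) $\mathcal{T}_{(k)}^{\mathcal{R}}\leq_{\mathrm{st}}\mathcal{T}_{(k)}$ for all reset laws $\mathcal{R}$; (b) $\mathcal{T}_{(k)}^{\delta_r}\leq_{\mathrm{st}}\mathcal{T}_{(k)}$ for all $r\in(0,\infty)$; (c) $\mathcal{T}_{(k)}^{\mathrm{Exp}(\mu)}\leq_{\mathrm{st}}\mathcal{T}_{(k)}$ for all $\mu\in(0,\infty)$; (d) $\mathcal{T}_{(k)}^{\mathcal{R}}[\mathrm{id}]\leq\mathcal{T}_{(k)}[\mathrm{id}]$ for all reset laws $\mathcal{R}$; (e) $\mathcal{T}_{(k)}^{\delta_r}[\mathrm{id}]\leq\mathcal{T}_{(k)}[\mathrm{id}]$ for all $r\in(0,\infty)$; (f) $\mathcal{T}_{(k)}^{\mathrm{Exp}(\mu)}[\mathrm{id}]\leq\mathcal{T}_{(k)}[\mathrm{id}]$ for all $\mu\in(0,\infty)$; (g) $\Gamma(1+2/k)\geq2\Gamma(1+1/k)^2$. Likewise, each of (a)–(f) with $\leq_{\mathrm{st}}$, $\leq$ replaced by $\geq_{\mathrm{st}}$, $\geq$ is equivalent to $k\geq1$, and each of (a)–(f) with $\leq_{\mathrm{st}}$, $\leq$ replaced by equality is equivalent to $k=1$.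
   Context: $\mathcal{Q}[\mathrm{id}]:=\int t\,\mathcal{Q}(\mathrm{d}t)$. A reset law is a probability law $\mathcal{R}$ on the Borel sets of $[0,\infty]$ with $\mathcal{R}((0,\infty])>0$ and $\mathcal{R}([0,\infty))>0$. Given a reset law $\mathcal{R}$ and a law $\mathcal{T}$ on $[0,\infty]$: let $(T_j)$ be i.i.d. with law $\mathcal{T}$ and $(R_j)$ an independent i.i.d. sequence with law $\mathcal{R}$; $\mathcal{T}^{\mathcal{R}}$ is the law of $\tilde T$ defined a.s. by $\tilde T=R_1+\cdots+R_{j-1}+T_j$ on $\{R_1<T_1,\ldots,R_{j-1}<T_{j-1},T_j\leq R_j\}$, $j\in\mathbb{N}$. $\delta_r$ is the Dirac mass at $r$, $\mathrm{Exp}(\mu)$ the exponential law with mean $\mu^{-1}$. $\mathcal{A}\leq_{\mathrm{st}}\mathcal{B}$ means $\mathcal{A}((t,\infty])\leq\mathcal{B}((t,\infty])$ for all $t\in[0,\infty)$. *)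

theory Defs
  imports "HOL-Probability.Probability"
begin

text \<open>Laws on [0,\<infinity>] are measures on the Borel sets of the type ennreal.\<close>

definition is_law :: "ennreal measure \<Rightarrow> bool" where
  "is_law Q \<longleftrightarrow> prob_space Q \<and> sets Q = sets borel"

definition is_reset_law :: "ennreal measure \<Rightarrow> bool" where
  "is_reset_law R \<longleftrightarrow> is_law R \<and> emeasure R {0<..} > 0 \<and> emeasure R {..<\<infinity>} > 0"

definition mean :: "ennreal measure \<Rightarrow> ennreal" where
  "mean Q = (\<integral>\<^sup>+ t. t \<partial>Q)"

definition stoch_le :: "ennreal measure \<Rightarrow> ennreal measure \<Rightarrow> bool" where
  "stoch_le A B \<longleftrightarrow> (\<forall>t::ennreal. t < \<infinity> \<longrightarrow> emeasure A {t<..} \<le> emeasure B {t<..})"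

text \<open>The completion time under resetting, as a function of the sequence of pairs
  (T_j, R_j) (indices starting at 0). On the event that T_j \<le> R_j never occurs
  (where the paper leaves it undefined) we set the value to \<infinity>.\<close>
definition reset_time :: "(nat \<Rightarrow> ennreal \<times> ennreal) \<Rightarrow> ennreal" where
  "reset_time \<omega> =
     (if \<exists>j. fst (\<omega> j) \<le> snd (\<omega> j)
      then (let j = (LEAST j. fst (\<omega> j) \<le> snd (\<omega> j))
            in (\<Sum>i<j. snd (\<omega> i)) + fst (\<omega> j))
      else \<infinity>)"

text \<open>T^R: law of the reset time when the pairs (T_j,R_j) are i.i.d. with law T \<otimes> R
  (equivalently, (T_j) i.i.d. ~ T independent of (R_j) i.i.d. ~ R).\<close>
definition reset_transform :: "ennreal measure \<Rightarrow> ennreal measure \<Rightarrow> ennreal measure" where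
  "reset_transform T R = distr (PiM UNIV (\<lambda>_::nat. T \<Otimes>\<^sub>M R)) borel reset_time"

definition dirac_law :: "real \<Rightarrow> ennreal measure" where
  "dirac_law r = return borel (ennreal r)"

text \<open>Exp(mu): exponential law with rate mu (mean 1/mu).\<close>
definition exp_law :: "real \<Rightarrow> ennreal measure" where
  "exp_law \<mu> = distr (density lborel (exponential_density \<mu>)) borel ennreal"

text \<open>Weibull law with shape k: tail e^(-x^k); given by its density k x^(k-1) e^(-x^k) on (0,\<infinity>).\<close>
definition weibull :: "real \<Rightarrow> ennreal measure" where
  "weibull k = distr (density lborel
      (\<lambda>x. ennreal (indicator {0<..} x * (k * x powr (k - 1) * exp (- (x powr k))))))
      borel ennreal"

end

(* The Weibull survival function S(x) = exp (-x^k) is new worse than used, S(x) S(y) \<le> S(x + y),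
   for k \<le> 1 and new better than used for k \<ge> 1, because x^k is subadditive resp. superadditive.
   Conditioning on the first attempt gives a renewal equation for the tails of T^R; comparing it
   with the same expression for S and iterating (the error shrinks by the restart probability
   P(R < T) < 1 each time) yields T^R \<le>st T resp. T \<le>st T^R for every reset law, hence the
   inequalities of means.
   Conversely, the renewal equation also gives mean T^R = E[min(T, R)] / P(T \<le> R). For the reset
   laws \<delta>_r and Exp(1/r) this is of order r^(1-k) as r \<rightarrow> 0: it exceeds mean T when k > 1 and
   falls below it when k < 1.
   Condition (g) is separate: ln \<Gamma>(1 + 2x) - 2 ln \<Gamma>(1 + x) is increasing because the digamma
   function is, and equals ln 2 at x = 1. *)

theory Submission
  imports Defs "HOL-Real_Asymp.Real_Asymp"
begin

section \<open>The Gamma criterion\<close>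

lemma ln_Gamma_double_diff_strict_mono:
  fixes x y :: real
  assumes "0 < x" "x < y"
  shows "ln_Gamma (1 + 2 * x) - 2 * ln_Gamma (1 + x) < ln_Gamma (1 + 2 * y) - 2 * ln_Gamma (1 + y)"
proof (rule DERIV_pos_imp_increasing[OF assms(2)])
  fix z assume "x \<le> z" "z \<le> y"
  with assms have z: "z > 0" by auto
  have "((\<lambda>z. ln_Gamma (1 + 2 * z) - 2 * ln_Gamma (1 + z)) has_real_derivative
          2 * (Digamma (1 + 2 * z) - Digamma (1 + z))) (at z)"
    using z by (auto intro!: derivative_eq_intros simp: algebra_simps)
  moreover have "Digamma (1 + z) < Digamma (1 + 2 * z)"
    using z by (intro Digamma_real_strict_mono) auto
  ultimately show "\<exists>d. ((\<lambda>z. ln_Gamma (1 + 2 * z) - 2 * ln_Gamma (1 + z)) has_real_derivative d) (at z) \<and> 0 < d"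
    by force
qed

lemma Gamma_double_ge_iff:
  fixes k :: real
  assumes "k > 0"
  shows "k \<le> 1 \<longleftrightarrow> Gamma (1 + 2 / k) \<ge> 2 * (Gamma (1 + 1 / k))\<^sup>2"
proof -
  define h where "h x = ln_Gamma (1 + 2 * x) - 2 * ln_Gamma (1 + x)" for x :: real
  define x where "x = 1 / k"
  have x: "x > 0" "1 / k = x" "2 / k = 2 * x" using assms by (simp_all add: x_def)
  have "Gamma (2::real) = 1" "Gamma (3::real) = 2"
    by (simp_all add: Gamma_numeral)
  then have "h 1 = ln 2"
    by (simp add: h_def ln_Gamma_real_pos)
  have Gamma_pos: "Gamma (1 + x) > 0" "Gamma (1 + 2 * x) > 0"
    using x by (simp_all add: Gamma_real_pos)
  have "Gamma (1 + 2 / k) \<ge> 2 * (Gamma (1 + 1 / k))\<^sup>2 \<longleftrightarrow>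
        ln (Gamma (1 + 2 * x)) \<ge> ln (2 * (Gamma (1 + x))\<^sup>2)"
    using Gamma_pos unfolding x(2,3) by (subst ln_le_cancel_iff) auto
  also have "ln (2 * (Gamma (1 + x))\<^sup>2) = ln 2 + 2 * ln (Gamma (1 + x))"
    using Gamma_pos by (simp add: ln_mult ln_realpow)
  also have "ln (Gamma (1 + 2 * x)) \<ge> ln 2 + 2 * ln (Gamma (1 + x)) \<longleftrightarrow> h x \<ge> h 1"
    using x \<open>h 1 = ln 2\<close> by (auto simp: h_def ln_Gamma_real_pos)
  also have "\<dots> \<longleftrightarrow> x \<ge> 1"
    using ln_Gamma_double_diff_strict_mono[of x 1] ln_Gamma_double_diff_strict_mono[of 1 x] x
    by (cases x "1::real" rule: linorder_cases) (auto simp: h_def)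
  also have "\<dots> \<longleftrightarrow> k \<le> 1"
    using assms by (simp add: x_def field_simps)
  finally show ?thesis ..
qed

section \<open>Survival functions and the stochastic order\<close>

(* For real a \<ge> 0 this is (a,\<infinity>]; for a < 0 it is all of [0,\<infinity>], so that the shifted tails
   tail_set (a - r) in the renewal equation need no case distinction. *)
definition tail_set :: "real \<Rightarrow> ennreal set" where
  "tail_set a = {x. x = \<infinity> \<or> a < enn2real x}"

definition survival :: "ennreal measure \<Rightarrow> real \<Rightarrow> ennreal" where
  "survival Q a = emeasure Q (tail_set a)"

definition new_worse_than_used :: "ennreal measure \<Rightarrow> bool" where
  "new_worse_than_used Q \<longleftrightarrow> (\<forall>x\<ge>0. \<forall>y\<ge>0. survival Q x * survival Q y \<le> survival Q (x + y))"

definition new_better_than_used :: "ennreal measure \<Rightarrow> bool" where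
  "new_better_than_used Q \<longleftrightarrow> (\<forall>x\<ge>0. \<forall>y\<ge>0. survival Q (x + y) \<le> survival Q x * survival Q y)"

lemma tail_set_neg: "a < 0 \<Longrightarrow> tail_set a = UNIV"
  by (auto simp: tail_set_def) (smt (verit) enn2real_nonneg)

lemma sets_tail_set[measurable]: "tail_set a \<in> sets borel"
  unfolding tail_set_def by measurable

lemma greaterThan_eq_tail_set: "t < \<infinity> \<Longrightarrow> {t<..} = tail_set (enn2real t)"
  unfolding tail_set_def
  by (auto simp: less_top)
     (metis enn2real_less_iff ennreal_enn2real_if less_top top.not_eq_extremum)+

lemma tail_set_eq_greaterThan: "0 \<le> a \<Longrightarrow> tail_set a = {ennreal a<..}"
  using greaterThan_eq_tail_set[of "ennreal a"] by simp

lemma tail_set_antimono: "a \<le> b \<Longrightarrow> tail_set b \<subseteq> tail_set a"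
  unfolding tail_set_def by auto

lemma shift_tail_set:
  assumes "0 \<le> r"
  shows "{x. ennreal r + x \<in> tail_set a} = tail_set (a - r)"
proof -
  have "ennreal r + x \<in> tail_set a \<longleftrightarrow> x \<in> tail_set (a - r)" for x
  proof (cases "x = \<infinity>")
    case False
    then have "enn2real (ennreal r + x) = r + enn2real x"
      using assms by (subst enn2real_plus) (auto simp: less_top)
    then show ?thesis using False unfolding tail_set_def by auto
  qed (auto simp: tail_set_def)
  then show ?thesis by auto
qed

lemma vimage_ennreal_tail_set: "ennreal -` tail_set a = {x. a < max x 0}"
proof -
  have "enn2real (ennreal x) = max x 0" for x
    by (cases "x \<ge> 0") (auto simp: ennreal_neg)
  then show ?thesis by (auto simp: tail_set_def)
qed

lemma space_law: "is_law Q \<Longrightarrow> space Q = UNIV"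
  by (simp add: is_law_def sets_eq_imp_space_eq[of Q borel])

lemma survival_neg:
  assumes "is_law Q" "a < 0"
  shows "survival Q a = 1"
  using assms prob_space.emeasure_space_1[of Q]
  by (simp add: is_law_def survival_def tail_set_neg space_law)

lemma survival_le_1: "is_law Q \<Longrightarrow> survival Q a \<le> 1"
  unfolding survival_def is_law_def by (simp add: prob_space.emeasure_le_1)

lemma borel_measurable_survival[measurable]:
  assumes "is_law Q"
  shows "survival Q \<in> borel_measurable borel"
proof -
  interpret prob_space Q using assms by (simp add: is_law_def)
  have sets_Q: "sets Q = sets borel" using assms by (simp add: is_law_def)
  have "mono (\<lambda>a. - measure Q (tail_set a))"
    by (auto simp: mono_def sets_Q intro!: finite_measure_mono tail_set_antimono)
  then have "(\<lambda>a. - measure Q (tail_set a)) \<in> borel_measurable borel"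
    by (rule borel_measurable_mono)
  then have "(\<lambda>a. ennreal (- (- measure Q (tail_set a)))) \<in> borel_measurable borel"
    by measurable
  moreover have "survival Q = (\<lambda>a. ennreal (- (- measure Q (tail_set a))))"
    by (simp add: fun_eq_iff survival_def emeasure_eq_measure)
  ultimately show ?thesis by simp
qed

lemma emeasure_lborel_atLeast: "emeasure lborel {a::real..} = \<infinity>"
proof -
  have "ennreal (real n) \<le> emeasure lborel {a..}" for n
    using emeasure_mono[of "{a..a + real n}" "{a..}" lborel] by simp
  then have "(SUP n. of_nat n) \<le> emeasure lborel {a..}"
    by (intro SUP_least) (simp add: ennreal_of_nat_eq_real_of_nat)
  then show ?thesis by (simp add: ennreal_SUP_of_nat_eq_top top_unique)
qed

lemma nn_integral_indicator_tail_set: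
  "(\<integral>\<^sup>+ t. indicator {0..} t * indicator (tail_set t) x \<partial>lborel) = x"
proof (cases "x = \<infinity>")
  case True
  then have "(\<lambda>t. indicator {0..} t * indicator (tail_set t) x :: ennreal) = indicator {0..}"
    by (auto simp: tail_set_def fun_eq_iff)
  then show ?thesis using True emeasure_lborel_atLeast by simp
next
  case False
  then obtain y where y: "x = ennreal y" "y \<ge> 0" by (cases x) auto
  then have "(\<lambda>t. indicator {0..} t * indicator (tail_set t) x :: ennreal) = indicator {0..<y}"
    by (auto simp: tail_set_def fun_eq_iff indicator_def)
  then show ?thesis using y by simp
qed

lemma mean_eq_nn_integral_survival:
  assumes "is_law Q"
  shows "mean Q = (\<integral>\<^sup>+ t. survival Q t * indicator {0..} t \<partial>lborel)"
proof -
  interpret Q: prob_space Q using assms by (simp add: is_law_def)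
  have sets_Q[measurable_cong]: "sets Q = sets borel" using assms by (simp add: is_law_def)
  interpret pair_sigma_finite lborel Q ..
  have "(\<lambda>(t, x). indicator {0..} t * indicator (tail_set t) x :: ennreal)
      = (\<lambda>(t, x). if 0 \<le> t \<and> (x = \<infinity> \<or> t < enn2real x) then 1 else 0)"
    by (auto simp: fun_eq_iff indicator_def tail_set_def)
  moreover have "\<dots> \<in> borel_measurable (lborel \<Otimes>\<^sub>M Q)" by measurable
  ultimately have meas: "(\<lambda>(t, x). indicator {0..} t * indicator (tail_set t) x :: ennreal)
      \<in> borel_measurable (lborel \<Otimes>\<^sub>M Q)" by simp
  have "mean Q = (\<integral>\<^sup>+ x. \<integral>\<^sup>+ t. indicator {0..} t * indicator (tail_set t) x \<partial>lborel \<partial>Q)"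
    by (simp add: mean_def nn_integral_indicator_tail_set)
  also have "\<dots> = (\<integral>\<^sup>+ t. \<integral>\<^sup>+ x. indicator {0..} t * indicator (tail_set t) x \<partial>Q \<partial>lborel)"
    using Fubini'[OF meas] by simp
  also have "\<dots> = (\<integral>\<^sup>+ t. survival Q t * indicator {0..} t \<partial>lborel)"
    by (intro nn_integral_cong) (simp add: survival_def nn_integral_cmult_indicator mult.commute)
  finally show ?thesis .
qed

lemma stoch_le_iff_survival: "stoch_le A B \<longleftrightarrow> (\<forall>a\<ge>0. survival A a \<le> survival B a)"
  unfolding stoch_le_def survival_def
proof safe
  fix a :: real assume "\<forall>t<\<infinity>. emeasure A {t<..} \<le> emeasure B {t<..}" "0 \<le> a"
  then show "emeasure A (tail_set a) \<le> emeasure B (tail_set a)"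
    by (simp add: tail_set_eq_greaterThan)
next
  fix t :: ennreal assume "\<forall>a\<ge>0. emeasure A (tail_set a) \<le> emeasure B (tail_set a)" "t < \<infinity>"
  then show "emeasure A {t<..} \<le> emeasure B {t<..}"
    by (simp add: greaterThan_eq_tail_set)
qed

lemma stoch_le_imp_mean_le:
  assumes "is_law A" "is_law B" "stoch_le A B"
  shows "mean A \<le> mean B"
  unfolding mean_eq_nn_integral_survival[OF assms(1)] mean_eq_nn_integral_survival[OF assms(2)]
  using assms(3) unfolding stoch_le_iff_survival
  by (intro nn_integral_mono) (auto simp: indicator_def)

lemma law_eqI:
  assumes A: "is_law A" and B: "is_law B"
    and survival_eq: "\<And>a. a \<ge> 0 \<Longrightarrow> survival A a = survival B a"
  shows "A = B"
proof -
  interpret A: prob_space A using A by (simp add: is_law_def)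
  interpret B: prob_space B using B by (simp add: is_law_def)
  let ?E = "insert UNIV (range greaterThan) :: ennreal set set"
  have "sigma_sets UNIV ?E = sigma_sets UNIV (range greaterThan)"
    by (intro sigma_sets_eqI) (auto intro: sigma_sets_top sigma_sets.Basic)
  also have "\<dots> = sets (borel :: ennreal measure)"
    by (subst borel_Ioi) simp
  finally have sets_E: "sigma_sets UNIV ?E = sets (borel :: ennreal measure)" .
  have space: "space A = UNIV" "space B = UNIV"
    using A B by (simp_all add: is_law_def sets_eq_imp_space_eq[of _ borel])
  show ?thesis
  proof (rule measure_eqI_generator_eq_countable[where E = ?E and \<Omega> = UNIV and A = "{UNIV}"])
    have "{a<..} \<inter> {b<..} = {max a b<..}" for a b :: ennreal by auto
    then show "Int_stable ?E"
      by (auto simp: Int_stable_def simp del: greaterThan_Int_greaterThan)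
    show "sets A = sigma_sets UNIV ?E" "sets B = sigma_sets UNIV ?E"
      using A B sets_E by (simp_all add: is_law_def)
    fix X assume "X \<in> ?E"
    then consider "X = UNIV" | t where "X = {t<..}" by auto
    then show "emeasure A X = emeasure B X"
    proof cases
      case (2 t)
      show ?thesis
      proof (cases "t = \<infinity>")
        case True
        then have "X = {}" using 2 by auto
        then show ?thesis by simp
      next
        case False
        then show ?thesis
          using 2 survival_eq[of "enn2real t"] by (simp add: survival_def greaterThan_eq_tail_set less_top)
      qed
    qed (use space A.emeasure_space_1 B.emeasure_space_1 in simp)
  qed (use space A.emeasure_space_1 in auto)
qed

lemma stoch_le_antisym:
  assumes "is_law A" "is_law B" "stoch_le A B" "stoch_le B A"
  shows "A = B"
  using assms by (intro law_eqI) (auto simp: stoch_le_iff_survival intro: antisym)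

lemma emeasure_atMost_eq:
  assumes "is_law Q" "0 \<le> x"
  shows "emeasure Q {..ennreal x} = 1 - survival Q x"
proof -
  interpret prob_space Q using assms(1) by (simp add: is_law_def)
  have "{..ennreal x} = space Q - tail_set x"
    using assms by (auto simp: space_law tail_set_eq_greaterThan)
  then show ?thesis
    using assms(1) by (simp add: emeasure_compl is_law_def survival_def emeasure_space_1)
qed

lemma exists_emeasure_greaterThan_pos:
  fixes Q :: "ennreal measure"
  assumes "sets Q = sets borel" "emeasure Q {0<..} > 0"
  obtains e :: real where "e > 0" "emeasure Q {ennreal e<..} > 0"
proof -
  have "{0<..} = (\<Union>n. {ennreal (1 / real (Suc n))<..})"
  proof safe
    fix x :: ennreal assume "x > 0"
    show "x \<in> (\<Union>n. {ennreal (1 / real (Suc n))<..})"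
    proof (cases "x = \<infinity>")
      case False
      then obtain y where y: "x = ennreal y" "y > 0"
        using \<open>x > 0\<close> by (cases x) auto
      then obtain n where "inverse (Suc n) < y"
        using reals_Archimedean by blast
      then have "ennreal (1 / real (Suc n)) < x"
        using y by (auto simp: field_simps intro!: ennreal_lessI)
      then show ?thesis by blast
    qed auto
  qed (auto intro: le_less_trans[OF zero_le])
  moreover have "emeasure Q (\<Union>n. {ennreal (1 / real (Suc n))<..}) = 0"
    if "\<And>n. emeasure Q {ennreal (1 / real (Suc n))<..} = 0"
    using that by (intro emeasure_UN_eq_0) (auto simp: assms(1))
  ultimately obtain n where "emeasure Q {ennreal (1 / real (Suc n))<..} \<noteq> 0"
    using assms(2) by force
  then show ?thesis
    by (intro that[of "1 / real (Suc n)"]) (auto simp: zero_less_iff_neq_zero)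
qed

section \<open>Resetting\<close>

lemma ennreal_le_of_le_add_power:
  fixes x y p :: ennreal
  assumes "p < 1" and le: "\<And>n. x \<le> y + p ^ n"
  shows "x \<le> y"
proof -
  obtain q where q: "p = ennreal q" "0 \<le> q" "q < 1"
    using assms(1) by (cases p) (auto simp: ennreal_less_one_iff)
  have "(\<lambda>n. y + ennreal (q ^ n)) \<longlonglongrightarrow> y + ennreal 0"
    using q by (intro tendsto_add tendsto_const tendsto_ennrealI LIMSEQ_power_zero) auto
  then show ?thesis
    using le q by (intro LIMSEQ_le_const[where a = x]) (auto simp: ennreal_power)
qed

(* M is the law of one attempt (T_j, R_j); it completes iff fst s \<le> snd s. *)
locale reset_setting =
  fixes T R :: "ennreal measure"
  assumes T: "is_law T" and R: "is_law R"
begin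

abbreviation "M \<equiv> T \<Otimes>\<^sub>M R"
abbreviation "P \<equiv> PiM (UNIV :: nat set) (\<lambda>_. M)"
abbreviation "\<nu> \<equiv> reset_transform T R"

lemma sets_T[measurable_cong]: "sets T = sets borel"
  using T by (simp add: is_law_def)

lemma sets_R[measurable_cong]: "sets R = sets borel"
  using R by (simp add: is_law_def)

sublocale T: prob_space T using T by (simp add: is_law_def)
sublocale R: prob_space R using R by (simp add: is_law_def)
sublocale TR: pair_prob_space T R ..
sublocale P: sequence_space M ..

lemma measurable_reset_time[measurable]: "reset_time \<in> borel_measurable P"
  unfolding reset_time_def Let_def by measurable

lemma is_law_reset_transform: "is_law \<nu>"
  unfolding is_law_def reset_transform_def by (auto intro!: P.prob_space_distr)

lemma sets_reset_transform[measurable_cong]: "sets \<nu> = sets borel"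
  using is_law_reset_transform by (simp add: is_law_def)

sublocale \<nu>: prob_space \<nu>
  using is_law_reset_transform by (simp add: is_law_def)

lemma reset_time_case_nat:
  "reset_time (case_nat s \<omega>) = (if fst s \<le> snd s then fst s else snd s + reset_time \<omega>)"
proof (cases "fst s \<le> snd s")
  case True
  then have "(LEAST j. fst (case_nat s \<omega> j) \<le> snd (case_nat s \<omega> j)) = 0"
    by (intro Least_eq_0) simp
  moreover have "\<exists>j. fst (case_nat s \<omega> j) \<le> snd (case_nat s \<omega> j)"
    using True by (intro exI[of _ 0]) simp
  ultimately show ?thesis using True by (simp add: reset_time_def)
next
  case restart: False
  show ?thesis
  proof (cases "\<exists>j. fst (\<omega> j) \<le> snd (\<omega> j)")
    case True
    then obtain j where j: "fst (\<omega> j) \<le> snd (\<omega> j)" by blast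
    define J where "J = (LEAST j. fst (\<omega> j) \<le> snd (\<omega> j))"
    have "(LEAST j. fst (case_nat s \<omega> j) \<le> snd (case_nat s \<omega> j)) = Suc J"
      using restart j unfolding J_def by (subst Least_Suc[of _ "Suc j"]) auto
    moreover have "(\<Sum>i<Suc J. snd (case_nat s \<omega> i)) = snd s + (\<Sum>i<J. snd (\<omega> i))"
      by (simp only: sum.lessThan_Suc_shift) simp
    moreover have "\<exists>j. fst (case_nat s \<omega> j) \<le> snd (case_nat s \<omega> j)"
      using j by (intro exI[of _ "Suc j"]) simp
    ultimately show ?thesis
      using restart True unfolding reset_time_def Let_def J_def[symmetric]
      by (simp del: sum.lessThan_Suc add: add.assoc)
  next
    case False
    then have "\<not> (\<exists>j. fst (case_nat s \<omega> j) \<le> snd (case_nat s \<omega> j))"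
      using restart by (auto split: nat.splits)
    then show ?thesis using restart False by (simp add: reset_time_def)
  qed
qed

(* Renewal equation: either the first attempt completes, or the reset time is R_1 plus an
   independent copy of itself. *)

lemma nn_integral_reset_transform:
  assumes g[measurable]: "g \<in> borel_measurable borel"
  shows "(\<integral>\<^sup>+x. g x \<partial>\<nu>) =
    (\<integral>\<^sup>+s. (if fst s \<le> snd s then g (fst s) else \<integral>\<^sup>+x. g (snd s + x) \<partial>\<nu>) \<partial>M)"
proof -
  have "(\<integral>\<^sup>+x. g x \<partial>\<nu>) = (\<integral>\<^sup>+\<omega>. g (reset_time \<omega>) \<partial>P)"
    unfolding reset_transform_def by (subst nn_integral_distr) auto
  also have "\<dots> = (\<integral>\<^sup>+\<omega>. g (reset_time \<omega>) \<partial>distr (M \<Otimes>\<^sub>M P) P (\<lambda>(s, \<omega>). case_nat s \<omega>))"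
    by (simp only: P.PiM_iter)
  also have "\<dots> = (\<integral>\<^sup>+s. \<integral>\<^sup>+\<omega>. g (reset_time (case_nat s \<omega>)) \<partial>P \<partial>M)"
    by (subst nn_integral_distr, measurable)
       (subst P.P.nn_integral_fst[symmetric], auto simp: case_prod_beta)
  also have "\<dots> = (\<integral>\<^sup>+s. (if fst s \<le> snd s then g (fst s) else \<integral>\<^sup>+x. g (snd s + x) \<partial>\<nu>) \<partial>M)"
    unfolding reset_transform_def
    by (intro nn_integral_cong)
       (auto simp: reset_time_case_nat P.P.emeasure_space_1 nn_integral_distr)
  finally show ?thesis .
qed

lemma space_M: "space M = UNIV"
  using space_law[OF T] space_law[OF R] by (simp add: space_pair_measure)

lemma sets_restart[measurable]: "{s. snd s < fst s} \<in> sets M"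
proof -
  have "{s \<in> space M. snd s < fst s} \<in> sets M" by measurable
  then show ?thesis by (simp add: space_M)
qed

lemma sets_completion[measurable]: "{s. fst s \<le> snd s} \<in> sets M"
proof -
  have "{s \<in> space M. fst s \<le> snd s} \<in> sets M" by measurable
  then show ?thesis by (simp add: space_M)
qed

(* The right-hand side of the renewal equation for P(T^R > a), with h in place of the tail
   function of T^R. *)
definition reset_step :: "(real \<Rightarrow> ennreal) \<Rightarrow> real \<Rightarrow> ennreal" where
  "reset_step h a =
     (\<integral>\<^sup>+s. (if fst s \<le> snd s then indicator (tail_set a) (fst s) else h (a - enn2real (snd s))) \<partial>M)"

lemma survival_reset_transform: "survival \<nu> a = reset_step (survival \<nu>) a"
proof -
  have "survival \<nu> a = (\<integral>\<^sup>+x. indicator (tail_set a) x \<partial>\<nu>)"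
    by (simp add: survival_def)
  also have "\<dots> = (\<integral>\<^sup>+s. (if fst s \<le> snd s then indicator (tail_set a) (fst s)
      else \<integral>\<^sup>+x. indicator (tail_set a) (snd s + x) \<partial>\<nu>) \<partial>M)"
    by (rule nn_integral_reset_transform) simp
  also have "\<dots> = reset_step (survival \<nu>) a"
    unfolding reset_step_def
  proof (intro nn_integral_cong)
    fix s :: "ennreal \<times> ennreal"
    show "(if fst s \<le> snd s then indicator (tail_set a) (fst s)
          else \<integral>\<^sup>+x. indicator (tail_set a) (snd s + x) \<partial>\<nu>)
        = (if fst s \<le> snd s then indicator (tail_set a) (fst s)
          else survival \<nu> (a - enn2real (snd s)))"
    proof (cases "fst s \<le> snd s")
      case False
      then have "snd s = ennreal (enn2real (snd s))"
        by (metis ennreal_enn2real_if not_le top.not_eq_extremum top_greatest)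
      then have "(\<lambda>x. indicator (tail_set a) (snd s + x) :: ennreal)
          = indicator {x. ennreal (enn2real (snd s)) + x \<in> tail_set a}"
        by (auto simp: indicator_def fun_eq_iff)
      then show ?thesis
        using False by (simp add: shift_tail_set survival_def)
    qed simp
  qed
  finally show ?thesis .
qed

lemma reset_step_mono: "(\<And>b. h b \<le> g b) \<Longrightarrow> reset_step h a \<le> reset_step g a"
  unfolding reset_step_def by (intro nn_integral_mono) auto

lemma reset_step_add_const:
  assumes [measurable]: "h \<in> borel_measurable borel"
  shows "reset_step (\<lambda>b. h b + c) a = reset_step h a + c * emeasure M {s. snd s < fst s}"
proof -
  have "reset_step (\<lambda>b. h b + c) a =
      (\<integral>\<^sup>+s. (if fst s \<le> snd s then indicator (tail_set a) (fst s) else h (a - enn2real (snd s)))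
             + c * indicator {s. snd s < fst s} s \<partial>M)"
    unfolding reset_step_def by (intro nn_integral_cong) (auto simp: indicator_def)
  also have "\<dots> = reset_step h a + c * emeasure M {s. snd s < fst s}"
    unfolding reset_step_def by (subst nn_integral_add) (auto simp: nn_integral_cmult_indicator)
  finally show ?thesis .
qed

lemma nn_integral_survival_split:
  "(\<integral>\<^sup>+t. (if t \<le> r then indicator (tail_set a) t else survival T (a - enn2real r)) \<partial>T) =
   (if r = \<infinity> \<or> a < enn2real r then survival T a
    else survival T (a - enn2real r) * survival T (enn2real r))"
proof (cases "r = \<infinity>")
  case True
  then show ?thesis by (simp add: survival_def sets_T)
next
  case False
  then obtain \<rho> where r: "r = ennreal \<rho>" "0 \<le> \<rho>" by (cases r) auto
  have above: "{t. \<not> t \<le> r} = tail_set \<rho>"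
    using r by (auto simp: tail_set_eq_greaterThan not_le)
  have "(\<integral>\<^sup>+t. (if t \<le> r then indicator (tail_set a) t else survival T (a - \<rho>)) \<partial>T)
      = (\<integral>\<^sup>+t. indicator (tail_set a - tail_set \<rho>) t
             + survival T (a - \<rho>) * indicator (tail_set \<rho>) t \<partial>T)"
    using above by (intro nn_integral_cong) (auto simp: indicator_def)
  also have "\<dots> = emeasure T (tail_set a - tail_set \<rho>) + survival T (a - \<rho>) * survival T \<rho>"
    by (subst nn_integral_add) (auto simp: sets_T nn_integral_cmult_indicator survival_def)
  also have "\<dots> = (if a < \<rho> then survival T a else survival T (a - \<rho>) * survival T \<rho>)"
  proof (cases "a < \<rho>")
    case True
    have "emeasure T (tail_set a - tail_set \<rho>) + survival T \<rho>
        = emeasure T ((tail_set a - tail_set \<rho>) \<union> tail_set \<rho>)"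
      unfolding survival_def by (intro plus_emeasure) (auto simp: sets_T)
    also have "(tail_set a - tail_set \<rho>) \<union> tail_set \<rho> = tail_set a"
      using True tail_set_antimono[of a \<rho>] by auto
    finally have "emeasure T (tail_set a - tail_set \<rho>) + survival T \<rho> = survival T a"
      by (simp add: survival_def)
    then show ?thesis using True survival_neg[OF T, of "a - \<rho>"] by simp
  next
    case False
    then have empty: "tail_set a - tail_set \<rho> = {}"
      using tail_set_antimono[of \<rho> a] by simp
    show ?thesis using False by (simp add: empty)
  qed
  finally show ?thesis using r by (simp cong: if_cong)
qed

lemma reset_step_survival:
  "reset_step (survival T) a =
     (\<integral>\<^sup>+r. (if r = \<infinity> \<or> a < enn2real r then survival T a
             else survival T (a - enn2real r) * survival T (enn2real r)) \<partial>R)"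
proof -
  note borel_measurable_survival[OF T, measurable]
  have "(\<lambda>s. if fst s \<le> snd s then indicator (tail_set a) (fst s)
           else survival T (a - enn2real (snd s))) \<in> borel_measurable M"
    by measurable
  from TR.nn_integral_snd[OF this]
  have "reset_step (survival T) a = (\<integral>\<^sup>+r. \<integral>\<^sup>+t. (if t \<le> r then indicator (tail_set a) t
      else survival T (a - enn2real r)) \<partial>T \<partial>R)"
    by (simp add: reset_step_def cong: if_cong)
  then show ?thesis by (simp add: nn_integral_survival_split)
qed

lemma reset_step_survival_le:
  assumes "new_worse_than_used T"
  shows "reset_step (survival T) a \<le> survival T a"
proof -
  have "reset_step (survival T) a \<le> (\<integral>\<^sup>+r. survival T a \<partial>R)"
    unfolding reset_step_survival
  proof (intro nn_integral_mono)
    fix r :: ennreal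
    have "\<not> a < enn2real r \<Longrightarrow> survival T (a - enn2real r) * survival T (enn2real r) \<le> survival T a"
      using assms[unfolded new_worse_than_used_def, rule_format, of "a - enn2real r" "enn2real r"] by simp
    then show "(if r = \<infinity> \<or> a < enn2real r then survival T a
        else survival T (a - enn2real r) * survival T (enn2real r)) \<le> survival T a"
      by auto
  qed
  then show ?thesis by (simp add: R.emeasure_space_1)
qed

lemma reset_step_survival_ge:
  assumes "new_better_than_used T"
  shows "survival T a \<le> reset_step (survival T) a"
proof -
  have "(\<integral>\<^sup>+r. survival T a \<partial>R) \<le> reset_step (survival T) a"
    unfolding reset_step_survival
  proof (intro nn_integral_mono)
    fix r :: ennreal
    have "\<not> a < enn2real r \<Longrightarrow> survival T a \<le> survival T (a - enn2real r) * survival T (enn2real r)"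
      using assms[unfolded new_better_than_used_def, rule_format, of "a - enn2real r" "enn2real r"] by simp
    then show "survival T a \<le> (if r = \<infinity> \<or> a < enn2real r then survival T a
        else survival T (a - enn2real r) * survival T (enn2real r))"
      by auto
  qed
  then show ?thesis by (simp add: R.emeasure_space_1)
qed

lemma emeasure_completion_add_restart:
  "emeasure M {s. fst s \<le> snd s} + emeasure M {s. snd s < fst s} = 1"
proof -
  have "emeasure M {s. fst s \<le> snd s} + emeasure M {s. snd s < fst s}
      = emeasure M ({s. fst s \<le> snd s} \<union> {s. snd s < fst s})"
    by (intro plus_emeasure) auto
  also have "{s. fst s \<le> snd s} \<union> {s. snd s < fst s} = space M"
    by (auto simp: space_M)
  finally show ?thesis by (simp add: TR.emeasure_space_1)
qed

lemma emeasure_restart_less_1: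
  assumes "emeasure M {s. fst s \<le> snd s} > 0"
  shows "emeasure M {s. snd s < fst s} < 1"
proof -
  have "emeasure M {s. snd s < fst s} + 0
      < emeasure M {s. snd s < fst s} + emeasure M {s. fst s \<le> snd s}"
    using assms TR.emeasure_finite by (subst ennreal_add_left_cancel_less) auto
  also have "\<dots> = 1"
    using emeasure_completion_add_restart by (simp add: add.commute)
  finally show ?thesis by simp
qed

(* Along the iteration the error against the survival function of T is multiplied by the
   restart probability at every step. *)

lemma survival_reset_transform_le:
  assumes "new_worse_than_used T" and "emeasure M {s. fst s \<le> snd s} > 0"
  shows "survival \<nu> a \<le> survival T a"
proof -
  define p where "p = emeasure M {s. snd s < fst s}"
  have p_less_1: "p < 1"
    using emeasure_restart_less_1[OF assms(2)] by (simp add: p_def)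
  have "survival \<nu> b \<le> survival T b + p ^ n" for n b
  proof (induction n arbitrary: b)
    case 0
    show ?case using survival_le_1[OF is_law_reset_transform] by (simp add: add_increasing)
  next
    case (Suc n)
    have "survival \<nu> b = reset_step (survival \<nu>) b"
      by (rule survival_reset_transform)
    also have "\<dots> \<le> reset_step (\<lambda>c. survival T c + p ^ n) b"
      by (intro reset_step_mono Suc.IH)
    also have "\<dots> = reset_step (survival T) b + p ^ Suc n"
      using borel_measurable_survival[OF T] by (simp add: reset_step_add_const p_def mult.commute)
    also have "\<dots> \<le> survival T b + p ^ Suc n"
      using reset_step_survival_le[OF assms(1)] by (rule add_right_mono)
    finally show ?case .
  qed
  with p_less_1 show ?thesis
    by (rule ennreal_le_of_le_add_power)
qed

lemma survival_reset_transform_ge: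
  assumes "new_better_than_used T" and "emeasure M {s. fst s \<le> snd s} > 0"
  shows "survival T a \<le> survival \<nu> a"
proof -
  define p where "p = emeasure M {s. snd s < fst s}"
  have p_less_1: "p < 1"
    using emeasure_restart_less_1[OF assms(2)] by (simp add: p_def)
  have "survival T b \<le> survival \<nu> b + p ^ n" for n b
  proof (induction n arbitrary: b)
    case 0
    show ?case using survival_le_1[OF T] by (simp add: add_increasing)
  next
    case (Suc n)
    have "survival T b \<le> reset_step (survival T) b"
      by (rule reset_step_survival_ge[OF assms(1)])
    also have "\<dots> \<le> reset_step (\<lambda>c. survival \<nu> c + p ^ n) b"
      by (intro reset_step_mono Suc.IH)
    also have "\<dots> = survival \<nu> b + p ^ Suc n"
      using borel_measurable_survival[OF is_law_reset_transform]
      by (simp add: reset_step_add_const p_def mult.commute survival_reset_transform[symmetric])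
    finally show ?case .
  qed
  with p_less_1 show ?thesis
    by (rule ennreal_le_of_le_add_power)
qed

lemma mean_reset_transform:
  "mean \<nu> = (\<integral>\<^sup>+s. min (fst s) (snd s) \<partial>M) + mean \<nu> * emeasure M {s. snd s < fst s}"
proof -
  have "mean \<nu> = (\<integral>\<^sup>+s. (if fst s \<le> snd s then fst s else \<integral>\<^sup>+x. snd s + x \<partial>\<nu>) \<partial>M)"
    unfolding mean_def by (rule nn_integral_reset_transform) simp
  also have "\<dots> = (\<integral>\<^sup>+s. min (fst s) (snd s) + mean \<nu> * indicator {s. snd s < fst s} s \<partial>M)"
  proof (intro nn_integral_cong)
    fix s :: "ennreal \<times> ennreal"
    have "(\<integral>\<^sup>+x. snd s + x \<partial>\<nu>) = snd s + mean \<nu>"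
      unfolding mean_def by (subst nn_integral_add) (auto simp: \<nu>.emeasure_space_1)
    then show "(if fst s \<le> snd s then fst s else \<integral>\<^sup>+x. snd s + x \<partial>\<nu>) =
        min (fst s) (snd s) + mean \<nu> * indicator {s. snd s < fst s} s"
      by (auto simp: min_def indicator_def)
  qed
  also have "\<dots> = (\<integral>\<^sup>+s. min (fst s) (snd s) \<partial>M) + mean \<nu> * emeasure M {s. snd s < fst s}"
    by (subst nn_integral_add) (auto simp: nn_integral_cmult_indicator)
  finally show ?thesis .
qed

lemma mean_reset_transform_mult_completion:
  assumes "mean \<nu> < \<infinity>"
  shows "mean \<nu> * emeasure M {s. fst s \<le> snd s} = (\<integral>\<^sup>+s. min (fst s) (snd s) \<partial>M)"
proof -
  let ?p = "emeasure M {s. snd s < fst s}"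
  have "mean \<nu> * ?p + mean \<nu> * emeasure M {s. fst s \<le> snd s} = mean \<nu>"
    using emeasure_completion_add_restart by (simp add: distrib_left[symmetric] add.commute)
  also have "\<dots> = mean \<nu> * ?p + (\<integral>\<^sup>+s. min (fst s) (snd s) \<partial>M)"
    by (subst mean_reset_transform) (simp add: add.commute)
  finally show ?thesis
    using assms TR.emeasure_finite by (auto simp: ennreal_add_left_cancel ennreal_mult_eq_top_iff)
qed

lemma mean_reset_transform_ge:
  assumes "0 < emeasure M {s. fst s \<le> snd s}"
    and "ennreal c * emeasure M {s. fst s \<le> snd s} \<le> (\<integral>\<^sup>+s. min (fst s) (snd s) \<partial>M)"
  shows "ennreal c \<le> mean \<nu>"
proof (cases "mean \<nu> < \<infinity>")
  case True
  then have "emeasure M {s. fst s \<le> snd s} * ennreal c \<le> emeasure M {s. fst s \<le> snd s} * mean \<nu>"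
    using assms(2) by (simp add: mean_reset_transform_mult_completion mult.commute)
  then show ?thesis
    using assms(1) TR.emeasure_finite by (simp add: ennreal_mult_le_mult_iff)
qed (simp add: not_less top_unique)

lemma mean_reset_transform_le:
  assumes "0 < emeasure M {s. fst s \<le> snd s}" "mean \<nu> < \<infinity>"
    and "(\<integral>\<^sup>+s. min (fst s) (snd s) \<partial>M) \<le> ennreal c * emeasure M {s. fst s \<le> snd s}"
  shows "mean \<nu> \<le> ennreal c"
proof -
  have "emeasure M {s. fst s \<le> snd s} * mean \<nu> \<le> emeasure M {s. fst s \<le> snd s} * ennreal c"
    using assms(2,3) by (simp add: mean_reset_transform_mult_completion mult.commute)
  then show ?thesis
    using assms(1) TR.emeasure_finite by (simp add: ennreal_mult_le_mult_iff)
qed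

lemma emeasure_completion_pos:
  assumes "is_reset_law R" and T_near_0: "\<And>e. e > 0 \<Longrightarrow> survival T e < 1"
  shows "emeasure M {s. fst s \<le> snd s} > 0"
proof -
  obtain e where e: "e > 0" "emeasure R {ennreal e<..} > 0"
    using exists_emeasure_greaterThan_pos[OF sets_R] assms(1) by (auto simp: is_reset_law_def)
  have "emeasure T {..ennreal e} > 0"
    using T_near_0[OF e(1)] e(1) by (simp add: emeasure_atMost_eq[OF T] diff_gr0_ennreal)
  then have "0 < emeasure T {..ennreal e} * emeasure R {ennreal e<..}"
    using e(2) by (simp add: ennreal_zero_less_mult_iff)
  also have "\<dots> = emeasure M ({..ennreal e} \<times> {ennreal e<..})"
    by (subst R.emeasure_pair_measure_Times) (auto simp: sets_T sets_R)
  also have "\<dots> \<le> emeasure M {s. fst s \<le> snd s}"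
    by (intro emeasure_mono) auto
  finally show ?thesis .
qed

end

section \<open>Weibull laws\<close>

definition weibull_density :: "real \<Rightarrow> real \<Rightarrow> real" where
  "weibull_density k x = indicator {0<..} x * (k * x powr (k - 1) * exp (- (x powr k)))"

lemma weibull_eq_distr: "weibull k = distr (density lborel (\<lambda>x. ennreal (weibull_density k x))) borel ennreal"
  unfolding weibull_def weibull_density_def ..

lemma borel_measurable_weibull_density[measurable]: "weibull_density k \<in> borel_measurable borel"
  unfolding weibull_density_def by measurable

lemma emeasure_weibull_density_greaterThan_pos:
  assumes k: "k > 0" and a: "a > 0"
  shows "emeasure (density lborel (\<lambda>x. ennreal (weibull_density k x))) {a<..} = exp (- (a powr k))"
proof -
  have "emeasure (density lborel (\<lambda>x. ennreal (weibull_density k x))) {a<..}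
      = (\<integral>\<^sup>+x. ennreal (weibull_density k x) * indicator {a..} x \<partial>lborel)"
    using AE_lborel_singleton[of a]
    by (subst emeasure_density) (auto intro!: nn_integral_cong_AE elim!: eventually_mono
        simp: indicator_def)
  also have "\<dots> = (\<integral>\<^sup>+x. ennreal (k * x powr (k - 1) * exp (- (x powr k))) * indicator {a..} x \<partial>lborel)"
    using a by (intro nn_integral_cong) (auto simp: weibull_density_def indicator_def)
  also have "\<dots> = ennreal (0 - (- exp (- (a powr k))))"
  proof (rule nn_integral_FTC_atLeast)
    fix x assume "a \<le> x"
    with a have "x > 0" by simp
    then show "((\<lambda>x. - exp (- (x powr k))) has_real_derivative k * x powr (k - 1) * exp (- (x powr k))) (at x)"
      by (auto intro!: derivative_eq_intros)
    show "0 \<le> k * x powr (k - 1) * exp (- (x powr k))" using k by simp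
  next
    show "((\<lambda>x. - exp (- (x powr k))) \<longlongrightarrow> 0) at_top" using k by real_asymp
  qed measurable
  finally show ?thesis by simp
qed

(* The density may be unbounded at 0, so the case a = 0 goes through monotone convergence. *)

lemma emeasure_weibull_density_greaterThan:
  assumes k: "k > 0" and a: "a \<ge> 0"
  shows "emeasure (density lborel (\<lambda>x. ennreal (weibull_density k x))) {a<..} = exp (- (a powr k))"
    (is "emeasure ?W _ = _")
proof (cases "a > 0")
  case True
  then show ?thesis using k by (simp add: emeasure_weibull_density_greaterThan_pos)
next
  case False
  with a have "a = 0" by simp
  let ?A = "\<lambda>n::nat. {1 / real (Suc n)<..}"
  have "{0<..} = (\<Union>n. ?A n)"
  proof safe
    fix x :: real assume "x > 0"
    then obtain n where "inverse (real (Suc n)) < x" using reals_Archimedean by blast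
    then show "x \<in> (\<Union>n. ?A n)" by (auto simp: field_simps)
  qed (auto intro: le_less_trans[rotated])
  moreover have "incseq ?A"
    by (auto simp: incseq_def frac_le intro: le_less_trans[rotated])
  moreover have "range ?A \<subseteq> sets ?W" by auto
  ultimately have "emeasure ?W {0<..} = (SUP n. emeasure ?W (?A n))"
    using SUP_emeasure_incseq[of ?A ?W] by simp
  also have "\<dots> = (SUP n. ennreal (exp (- ((1 / real (Suc n)) powr k))))"
    using k by (simp add: emeasure_weibull_density_greaterThan_pos)
  also have "\<dots> = 1"
  proof (rule SUP_Lim)
    show "incseq (\<lambda>n. ennreal (exp (- ((1 / real (Suc n)) powr k))))"
      using k by (auto simp: incseq_def intro!: ennreal_leI powr_mono2 frac_le)
    have "(\<lambda>n. (1 / real (Suc n)) powr k) \<longlonglongrightarrow> 0"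
      using k by (intro tendsto_zero_powrI LIMSEQ_Suc[OF lim_const_over_n]) auto
    then have "(\<lambda>n. exp (- ((1 / real (Suc n)) powr k))) \<longlonglongrightarrow> exp (- 0)"
      by (intro tendsto_intros)
    then show "(\<lambda>n. ennreal (exp (- ((1 / real (Suc n)) powr k)))) \<longlonglongrightarrow> 1"
      by (intro tendsto_ennrealI[where x = 1, simplified]) simp
  qed
  finally show ?thesis using \<open>a = 0\<close> k by simp
qed

lemma prob_space_weibull_density:
  assumes k: "k > 0"
  shows "prob_space (density lborel (\<lambda>x. ennreal (weibull_density k x)))" (is "prob_space ?W")
proof
  have "(\<lambda>x. ennreal (weibull_density k x) * indicator {..0} x) = (\<lambda>_. 0)"
    by (auto simp: fun_eq_iff weibull_density_def indicator_def)
  then have "emeasure ?W {..0} = 0"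
    by (subst emeasure_density) auto
  moreover have "emeasure ?W {..0} + emeasure ?W {0<..} = emeasure ?W ({..0} \<union> {0<..})"
    by (intro plus_emeasure) auto
  moreover have "{..0} \<union> {0<..} = space ?W" by auto
  ultimately show "emeasure ?W (space ?W) = 1"
    using emeasure_weibull_density_greaterThan[OF k, of 0] k by simp
qed

lemma is_law_weibull: "k > 0 \<Longrightarrow> is_law (weibull k)"
  unfolding is_law_def weibull_eq_distr
  by (auto intro!: prob_space.prob_space_distr prob_space_weibull_density)

lemma survival_weibull:
  assumes k: "k > 0"
  shows "survival (weibull k) a = ennreal (exp (- (max a 0 powr k)))"
proof -
  let ?W = "density lborel (\<lambda>x. ennreal (weibull_density k x))"
  have "survival (weibull k) a = emeasure ?W {x. a < max x 0}"
    unfolding survival_def weibull_eq_distr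
    by (subst emeasure_distr) (auto simp: vimage_ennreal_tail_set)
  also have "\<dots> = ennreal (exp (- (max a 0 powr k)))"
  proof (cases "a \<ge> 0")
    case True
    then have "{x. a < max x 0} = {a<..}" by auto
    then show ?thesis using True k by (simp add: emeasure_weibull_density_greaterThan)
  next
    case False
    then have "{x. a < max x 0} = space ?W" by auto
    then show ?thesis
      using False k prob_space.emeasure_space_1[OF prob_space_weibull_density[OF k]] by simp
  qed
  finally show ?thesis .
qed

lemma powr_add_le_add_powr:
  fixes x y k :: real
  assumes "0 \<le> x" "0 \<le> y" "0 < k" "k \<le> 1"
  shows "(x + y) powr k \<le> x powr k + y powr k"
proof (cases "x + y = 0")
  case False
  define s where "s = x + y"
  have s: "s > 0" using False assms by (simp add: s_def)
  have "x / s \<le> (x / s) powr k" "y / s \<le> (y / s) powr k"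
    using powr_mono'[of k 1 "x / s"] powr_mono'[of k 1 "y / s"] assms s
    by (auto simp: s_def divide_le_eq_1)
  moreover have "x / s + y / s = 1"
    using s by (simp add: s_def add_divide_distrib[symmetric])
  ultimately have "1 \<le> (x / s) powr k + (y / s) powr k"
    by linarith
  then show ?thesis
    using s by (simp add: powr_divide add_divide_distrib[symmetric] le_divide_eq s_def)
qed (use assms in simp)

lemma add_powr_le_powr_add:
  fixes x y k :: real
  assumes "0 \<le> x" "0 \<le> y" "1 \<le> k"
  shows "x powr k + y powr k \<le> (x + y) powr k"
proof (cases "x + y = 0")
  case False
  define s where "s = x + y"
  have s: "s > 0" using False assms by (simp add: s_def)
  have "(x / s) powr k \<le> x / s" "(y / s) powr k \<le> y / s"
    using powr_mono'[of 1 k "x / s"] powr_mono'[of 1 k "y / s"] assms s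
    by (auto simp: s_def divide_le_eq_1)
  moreover have "x / s + y / s = 1"
    using s by (simp add: s_def add_divide_distrib[symmetric])
  ultimately have "(x / s) powr k + (y / s) powr k \<le> 1"
    by linarith
  then show ?thesis
    using s by (simp add: powr_divide add_divide_distrib[symmetric] divide_le_eq s_def)
qed (use assms in \<open>simp add: add_nonneg_eq_0_iff\<close>)

lemma new_worse_than_used_weibull:
  assumes "0 < k" "k \<le> 1"
  shows "new_worse_than_used (weibull k)"
proof -
  have "exp (- (x powr k)) * exp (- (y powr k)) \<le> exp (- ((x + y) powr k))" if "x \<ge> 0" "y \<ge> 0" for x y
    using powr_add_le_add_powr[OF that assms] by (simp add: exp_add[symmetric])
  then show ?thesis
    using assms by (simp add: new_worse_than_used_def survival_weibull ennreal_mult'[symmetric] ennreal_leI)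
qed

lemma new_better_than_used_weibull:
  assumes "1 \<le> k"
  shows "new_better_than_used (weibull k)"
proof -
  have "exp (- ((x + y) powr k)) \<le> exp (- (x powr k)) * exp (- (y powr k))" if "x \<ge> 0" "y \<ge> 0" for x y
    using add_powr_le_powr_add[OF that assms] by (simp add: exp_add[symmetric])
  then show ?thesis
    using assms by (simp add: new_better_than_used_def survival_weibull ennreal_mult'[symmetric] ennreal_leI)
qed

lemma emeasure_weibull_atMost:
  assumes "0 < k" "0 \<le> x"
  shows "emeasure (weibull k) {..ennreal x} = 1 - exp (- (x powr k))"
  using assms by (simp add: emeasure_atMost_eq is_law_weibull survival_weibull ennreal_minus[symmetric])

lemma survival_weibull_less_1: "0 < k \<Longrightarrow> 0 < e \<Longrightarrow> survival (weibull k) e < 1"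
  by (simp add: survival_weibull)

lemma emeasure_completion_weibull_pos:
  assumes "k > 0" "is_reset_law R"
  shows "emeasure (weibull k \<Otimes>\<^sub>M R) {s. fst s \<le> snd s} > 0"
proof -
  interpret reset_setting "weibull k" R
    using assms is_law_weibull by unfold_locales (auto simp: is_reset_law_def)
  show ?thesis
    using assms by (intro emeasure_completion_pos) (auto intro: survival_weibull_less_1)
qed

lemma reset_transform_weibull_stoch_le:
  assumes "0 < k" "k \<le> 1" "is_reset_law R"
  shows "stoch_le (reset_transform (weibull k) R) (weibull k)"
proof -
  interpret reset_setting "weibull k" R
    using assms is_law_weibull by unfold_locales (auto simp: is_reset_law_def)
  show ?thesis
    using survival_reset_transform_le new_worse_than_used_weibull emeasure_completion_weibull_pos assms
    by (simp add: stoch_le_iff_survival)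
qed

lemma reset_transform_weibull_stoch_ge:
  assumes "1 \<le> k" "is_reset_law R"
  shows "stoch_le (weibull k) (reset_transform (weibull k) R)"
proof -
  interpret reset_setting "weibull k" R
    using assms is_law_weibull by unfold_locales (auto simp: is_reset_law_def)
  show ?thesis
    using survival_reset_transform_ge new_better_than_used_weibull emeasure_completion_weibull_pos assms
    by (simp add: stoch_le_iff_survival)
qed

lemma exp_neg_powr_le:
  fixes k t :: real
  assumes k: "k > 0" and t: "t > 0"
  shows "exp (- (t powr k)) \<le> (2 / k) powr (2 / k) / t\<^sup>2"
proof -
  have "k / 2 * t powr k \<le> exp (k / 2 * t powr k)"
    using exp_ge_add_one_self[of "k / 2 * t powr k"] by linarith
  then have "(k / 2 * t powr k) powr (2 / k) \<le> exp (k / 2 * t powr k) powr (2 / k)"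
    using k t by (intro powr_mono2) auto
  also have "\<dots> = exp (t powr k)"
    using k by (simp add: powr_def)
  also have "(k / 2 * t powr k) powr (2 / k) = (k / 2) powr (2 / k) * t\<^sup>2"
  proof -
    have "(k / 2 * t powr k) powr (2 / k) = (k / 2) powr (2 / k) * (t powr k) powr (2 / k)"
      using powr_mult[of "k / 2" "t powr k" "2 / k"] k t by simp
    also have "(t powr k) powr (2 / k) = t powr real 2"
      using k by (simp add: powr_powr)
    finally show ?thesis using t by (simp add: powr_realpow)
  qed
  finally have "(k / 2) powr (2 / k) * t\<^sup>2 \<le> exp (t powr k)" .
  then have "1 / exp (t powr k) \<le> 1 / ((k / 2) powr (2 / k) * t\<^sup>2)"
    using k t by (intro divide_left_mono) auto
  then show ?thesis
    using k t by (simp add: exp_minus powr_divide field_simps)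
qed

lemma nn_integral_inverse_square: "(\<integral>\<^sup>+t. ennreal (1 / t\<^sup>2) * indicator {1..} t \<partial>lborel) = 1"
proof -
  have "(\<integral>\<^sup>+t. ennreal (1 / t\<^sup>2) * indicator {1..} t \<partial>lborel) = ennreal (0 - (- 1 / 1))"
  proof (rule nn_integral_FTC_atLeast[where F = "\<lambda>t. - 1 / t"])
    fix x :: real assume "1 \<le> x"
    then show "((\<lambda>t. - 1 / t) has_real_derivative 1 / x\<^sup>2) (at x)"
      by (auto intro!: derivative_eq_intros simp: power2_eq_square)
  qed (simp_all, real_asymp)
  then show ?thesis by simp
qed

lemma mean_weibull:
  assumes "k > 0"
  shows "mean (weibull k) = (\<integral>\<^sup>+t. ennreal (exp (- (max t 0 powr k))) * indicator {0..} t \<partial>lborel)"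
  using mean_eq_nn_integral_survival[OF is_law_weibull[OF assms]] by (simp add: survival_weibull assms)

lemma mean_weibull_ge: "k > 0 \<Longrightarrow> exp (- 1) \<le> mean (weibull k)"
proof -
  assume k: "k > 0"
  have "ennreal (exp (- 1)) = ennreal (exp (- 1)) * emeasure lborel {0::real..1}"
    by simp
  also have "\<dots> = (\<integral>\<^sup>+t. ennreal (exp (- 1)) * indicator {0::real..1} t \<partial>lborel)"
    by (rule nn_integral_cmult_indicator[symmetric]) simp
  also have "\<dots> \<le> mean (weibull k)"
    unfolding mean_weibull[OF k]
  proof (intro nn_integral_mono)
    fix t :: real
    have "t \<in> {0..1} \<Longrightarrow> t powr k \<le> 1" using k by (intro powr_le1) auto
    then show "ennreal (exp (- 1)) * indicator {0..1} t
        \<le> ennreal (exp (- (max t 0 powr k))) * indicator {0..} t"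
      by (auto simp: indicator_def intro!: ennreal_leI)
  qed
  finally show ?thesis .
qed

lemma mean_weibull_finite:
  assumes k: "k > 0"
  shows "mean (weibull k) < \<infinity>"
proof -
  let ?C = "(2 / k) powr (2 / k)"
  have "mean (weibull k)
      \<le> (\<integral>\<^sup>+t. indicator {0..1} t + ennreal ?C * (ennreal (1 / t\<^sup>2) * indicator {1..} t) \<partial>lborel)"
    unfolding mean_weibull[OF k]
  proof (intro nn_integral_mono)
    fix t :: real
    show "ennreal (exp (- (max t 0 powr k))) * indicator {0..} t
        \<le> indicator {0..1} t + ennreal ?C * (ennreal (1 / t\<^sup>2) * indicator {1..} t)"
    proof (cases "t \<le> 1")
      case True
      then show ?thesis by (auto simp: indicator_def intro: add_increasing2)
    next
      case False
      then have "exp (- (max t 0 powr k)) \<le> ?C * (1 / t\<^sup>2)"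
        using exp_neg_powr_le[OF k, of t] by simp
      then show ?thesis
        using False by (auto simp: indicator_def ennreal_mult'[symmetric] intro!: ennreal_leI)
    qed
  qed
  also have "\<dots> = 1 + ennreal ?C"
    by (subst nn_integral_add) (auto simp: nn_integral_cmult nn_integral_inverse_square)
  finally show ?thesis by (simp add: le_less_trans)
qed

section \<open>Deterministic and exponential resets\<close>

lemma one_minus_exp_neg_le: "1 - exp (- y) \<le> (y :: real)"
  using exp_ge_add_one_self[of "- y"] by simp

lemma one_minus_exp_neg_ge:
  fixes y :: real
  assumes "0 \<le> y" "y \<le> 1"
  shows "y / 2 \<le> 1 - exp (- y)"
proof -
  have "exp (- y) \<le> 1 / (1 + y)"
    using exp_ge_add_one_self[of y] assms by (simp add: exp_minus field_simps)
  moreover have "y / 2 \<le> 1 - 1 / (1 + y)"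
    using assms mult_left_mono[of y 1 y] by (simp add: field_simps)
  ultimately show ?thesis by simp
qed

lemma exists_small_powr_gt:
  fixes a c :: real
  assumes "a < 0"
  obtains x where "0 < x" "x \<le> 1" "c < x powr a"
proof
  let ?x = "(\<bar>c\<bar> + 1) powr (1 / a)"
  show "0 < ?x" by simp
  show "?x \<le> 1" using assms powr_mono[of "1 / a" 0 "\<bar>c\<bar> + 1"] by (simp split: if_splits)
  have "?x powr a = \<bar>c\<bar> + 1" using assms by (simp add: powr_powr)
  then show "c < ?x powr a" by simp
qed

lemma exists_small_powr_lt:
  fixes a c :: real
  assumes "0 < a" "0 < c"
  obtains x where "0 < x" "x \<le> 1" "x powr a < c"
proof
  let ?x = "min 1 (c / 2) powr (1 / a)"
  show "0 < ?x" using assms by simp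
  show "?x \<le> 1" using assms by (intro powr_le1) auto
  have "?x powr a = min 1 (c / 2)" using assms by (simp add: powr_powr)
  then show "?x powr a < c" using assms by simp
qed

lemma is_reset_law_dirac_law: "r > 0 \<Longrightarrow> is_reset_law (dirac_law r)"
  unfolding is_reset_law_def is_law_def dirac_law_def
  by (auto intro!: prob_space_return simp: emeasure_return)

context
  fixes k \<rho> :: real
  assumes k: "k > 0" and \<rho>: "\<rho> > 0"
begin

interpretation reset_setting "weibull k" "dirac_law \<rho>"
  using is_law_weibull[OF k] is_reset_law_dirac_law[OF \<rho>] by unfold_locales (auto simp: is_reset_law_def)

lemma emeasure_completion_dirac: "emeasure M {s. fst s \<le> snd s} = ennreal (1 - exp (- (\<rho> powr k)))"
proof -
  have "emeasure M {s. fst s \<le> snd s} = (\<integral>\<^sup>+t. emeasure (dirac_law \<rho>) (Pair t -` {s. fst s \<le> snd s}) \<partial>weibull k)"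
    by (rule R.emeasure_pair_measure_alt) simp
  also have "\<dots> = (\<integral>\<^sup>+t. indicator {..ennreal \<rho>} t \<partial>weibull k)"
    by (intro nn_integral_cong) (simp add: dirac_law_def emeasure_return indicator_def)
  finally show ?thesis
    using k \<rho> by (simp add: sets_T emeasure_weibull_atMost)
qed

lemma nn_integral_min_dirac: "(\<integral>\<^sup>+s. min (fst s) (snd s) \<partial>M) = (\<integral>\<^sup>+t. min t (ennreal \<rho>) \<partial>weibull k)"
proof -
  have "(\<integral>\<^sup>+s. min (fst s) (snd s) \<partial>M) = (\<integral>\<^sup>+t. \<integral>\<^sup>+r. min t r \<partial>dirac_law \<rho> \<partial>weibull k)"
    by (subst R.nn_integral_fst[symmetric]) (auto simp: case_prod_beta)
  then show ?thesis by (simp add: dirac_law_def nn_integral_return)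
qed

lemma mean_reset_dirac_ge:
  assumes "\<rho> \<le> 1"
  shows "ennreal (exp (- 1) * \<rho> powr (1 - k)) \<le> mean \<nu>"
proof (rule mean_reset_transform_ge)
  have "\<rho> powr k \<le> 1" using assms \<rho> k by (intro powr_le1) auto
  have "ennreal (exp (- 1) * \<rho>) \<le> ennreal (\<rho> * exp (- (\<rho> powr k)))"
    using \<open>\<rho> powr k \<le> 1\<close> \<rho> by (intro ennreal_leI) (simp add: mult.commute)
  also have "\<dots> = (\<integral>\<^sup>+t. ennreal \<rho> * indicator (tail_set \<rho>) t \<partial>weibull k)"
    using survival_weibull[OF k, of \<rho>] \<rho>
    by (simp add: nn_integral_cmult_indicator sets_T survival_def ennreal_mult)
  also have "\<dots> \<le> (\<integral>\<^sup>+t. min t (ennreal \<rho>) \<partial>weibull k)"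
    using \<rho> by (intro nn_integral_mono) (auto simp: indicator_def tail_set_eq_greaterThan)
  finally have min_ge: "ennreal (exp (- 1) * \<rho>) \<le> (\<integral>\<^sup>+s. min (fst s) (snd s) \<partial>M)"
    by (simp add: nn_integral_min_dirac)
  have "\<rho> powr (1 - k) * (1 - exp (- (\<rho> powr k))) \<le> \<rho> powr (1 - k) * \<rho> powr k"
    by (intro mult_left_mono one_minus_exp_neg_le) simp
  also have "\<dots> = \<rho>"
    using \<rho> by (simp add: powr_add[symmetric])
  finally have "exp (- 1) * \<rho> powr (1 - k) * (1 - exp (- (\<rho> powr k))) \<le> exp (- 1) * \<rho>"
    by (simp add: mult.assoc)
  then show "ennreal (exp (- 1) * \<rho> powr (1 - k)) * emeasure M {s. fst s \<le> snd s}
      \<le> (\<integral>\<^sup>+s. min (fst s) (snd s) \<partial>M)"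
    by (simp add: emeasure_completion_dirac ennreal_mult'[symmetric] order_trans[OF ennreal_leI min_ge])
  show "0 < emeasure M {s. fst s \<le> snd s}"
    using \<rho> k by (simp add: emeasure_completion_dirac)
qed

lemma mean_reset_dirac_le:
  assumes "k \<le> 1" "\<rho> \<le> 1"
  shows "mean \<nu> \<le> ennreal (2 * \<rho> powr (1 - k))"
proof (rule mean_reset_transform_le)
  show "0 < emeasure M {s. fst s \<le> snd s}"
    using \<rho> k by (simp add: emeasure_completion_dirac)
  have "mean \<nu> \<le> mean (weibull k)"
    using assms k \<rho> by (intro stoch_le_imp_mean_le is_law_reset_transform T
        reset_transform_weibull_stoch_le is_reset_law_dirac_law)
  then show "mean \<nu> < \<infinity>"
    using mean_weibull_finite[OF k] by (rule le_less_trans)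
  have "(\<integral>\<^sup>+s. min (fst s) (snd s) \<partial>M) \<le> (\<integral>\<^sup>+t. ennreal \<rho> \<partial>weibull k)"
    unfolding nn_integral_min_dirac by (intro nn_integral_mono) simp
  also have "\<dots> = ennreal \<rho>" by (simp add: T.emeasure_space_1)
  also have "\<rho> \<le> 2 * \<rho> powr (1 - k) * (1 - exp (- (\<rho> powr k)))"
  proof -
    have "\<rho> powr k \<le> 1" using assms \<rho> k by (intro powr_le1) auto
    then have "\<rho> powr k / 2 \<le> 1 - exp (- (\<rho> powr k))"
      by (intro one_minus_exp_neg_ge) auto
    moreover have "\<rho> = 2 * \<rho> powr (1 - k) * (\<rho> powr k / 2)"
      using \<rho> by (simp add: powr_add[symmetric])
    ultimately show ?thesis
      by (metis mult_left_mono powr_ge_zero zero_le_numeral mult_nonneg_nonneg)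
  qed
  then have "ennreal \<rho> \<le> ennreal (2 * \<rho> powr (1 - k)) * emeasure M {s. fst s \<le> snd s}"
    by (simp add: emeasure_completion_dirac ennreal_mult'[symmetric] ennreal_leI)
  finally show "(\<integral>\<^sup>+s. min (fst s) (snd s) \<partial>M) \<le> ennreal (2 * \<rho> powr (1 - k)) * emeasure M {s. fst s \<le> snd s}" .
qed

end

lemma weibull_dirac_mean_gt:
  assumes "k > 1"
  shows "\<exists>r>0. mean (weibull k) < mean (reset_transform (weibull k) (dirac_law r))"
proof -
  obtain B where B: "mean (weibull k) = ennreal B" "0 \<le> B"
    using mean_weibull_finite[of k] assms by (cases "mean (weibull k)") auto
  obtain \<rho> where \<rho>: "0 < \<rho>" "\<rho> \<le> 1" "exp 1 * B < \<rho> powr (1 - k)"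
    using assms exists_small_powr_gt[of "1 - k" "exp 1 * B"] by auto
  then have "B < exp (- 1) * \<rho> powr (1 - k)"
    by (simp add: exp_minus field_simps)
  then have "mean (weibull k) < ennreal (exp (- 1) * \<rho> powr (1 - k))"
    using B by (simp add: ennreal_lessI)
  also have "\<dots> \<le> mean (reset_transform (weibull k) (dirac_law \<rho>))"
    using assms \<rho> by (intro mean_reset_dirac_ge) auto
  finally show ?thesis using \<rho> by blast
qed

lemma weibull_dirac_mean_lt:
  assumes "0 < k" "k < 1"
  shows "\<exists>r>0. mean (reset_transform (weibull k) (dirac_law r)) < mean (weibull k)"
proof -
  obtain \<rho> where \<rho>: "0 < \<rho>" "\<rho> \<le> 1" "\<rho> powr (1 - k) < exp (- 1) / 2"
    using assms exists_small_powr_lt[of "1 - k" "exp (- 1) / 2"] by auto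
  have "mean (reset_transform (weibull k) (dirac_law \<rho>)) \<le> ennreal (2 * \<rho> powr (1 - k))"
    using assms \<rho> by (intro mean_reset_dirac_le) auto
  also have "\<dots> < ennreal (exp (- 1))"
    using \<rho> by (intro ennreal_lessI) auto
  also have "\<dots> \<le> mean (weibull k)"
    using assms by (intro mean_weibull_ge) auto
  finally show ?thesis using \<rho> by blast
qed

lemma emeasure_exponential_density_greaterThan:
  assumes "0 < \<mu>" "0 \<le> a"
  shows "emeasure (density lborel (exponential_density \<mu>)) {a<..} = exp (- a * \<mu>)"
proof -
  interpret prob_space "density lborel (exponential_density \<mu>)"
    using assms(1) by (rule prob_space_exponential_density)
  have "measure (density lborel (exponential_density \<mu>)) {..a} = 1 - exp (- \<mu> * a)"
    using assms emeasure_erlang_density[of \<mu> 0 a] by (simp add: emeasure_eq_measure erlang_CDF_0)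
  moreover have "space (density lborel (exponential_density \<mu>)) - {..a} = {a<..}" by auto
  ultimately have "measure (density lborel (exponential_density \<mu>)) {a<..} = exp (- a * \<mu>)"
    using prob_compl[of "{..a}"] by (simp add: mult.commute)
  then show ?thesis by (simp add: emeasure_eq_measure)
qed

lemma is_law_exp_law: "0 < \<mu> \<Longrightarrow> is_law (exp_law \<mu>)"
  unfolding is_law_def exp_law_def
  by (auto intro!: prob_space.prob_space_distr prob_space_exponential_density)

lemma survival_exp_law:
  assumes "0 < \<mu>"
  shows "survival (exp_law \<mu>) a = exp (- max a 0 * \<mu>)"
proof -
  have "survival (exp_law \<mu>) a = emeasure (density lborel (exponential_density \<mu>)) {x. a < max x 0}"
    unfolding survival_def exp_law_def by (subst emeasure_distr) (auto simp: vimage_ennreal_tail_set)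
  also have "\<dots> = exp (- max a 0 * \<mu>)"
  proof (cases "a \<ge> 0")
    case True
    then have "{x. a < max x 0} = {a<..}" by auto
    then show ?thesis using True assms by (simp add: emeasure_exponential_density_greaterThan)
  next
    case False
    then have "{x. a < max x 0} = space (density lborel (exponential_density \<mu>))" by auto
    then show ?thesis
      using False prob_space.emeasure_space_1[OF prob_space_exponential_density[OF assms]] by simp
  qed
  finally show ?thesis .
qed

lemma is_reset_law_exp_law:
  assumes "0 < \<mu>"
  shows "is_reset_law (exp_law \<mu>)"
proof -
  have "emeasure (exp_law \<mu>) {0<..} = 1"
    using survival_exp_law[OF assms, of 0] by (simp add: survival_def tail_set_eq_greaterThan)
  moreover have "ennreal -` {..<\<infinity>} = UNIV" by auto
  then have "emeasure (exp_law \<mu>) {..<\<infinity>} = 1"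
    using prob_space.emeasure_space_1[OF prob_space_exponential_density[OF assms]]
    by (simp add: exp_law_def emeasure_distr)
  ultimately show ?thesis
    using is_law_exp_law[OF assms] by (simp add: is_reset_law_def)
qed

lemma nn_integral_exp_law:
  assumes "0 < \<mu>" and [measurable]: "g \<in> borel_measurable borel"
  shows "(\<integral>\<^sup>+r. g r \<partial>exp_law \<mu>) = (\<integral>\<^sup>+x. ennreal (exponential_density \<mu> x) * g (ennreal x) \<partial>lborel)"
  unfolding exp_law_def by (subst nn_integral_distr) (auto simp: nn_integral_density)

lemma mean_exp_law:
  assumes "0 < \<mu>"
  shows "mean (exp_law \<mu>) = 1 / \<mu>"
proof -
  have "mean (exp_law \<mu>) = (\<integral>\<^sup>+x. ennreal (exponential_density \<mu> x * x ^ 1) \<partial>lborel)"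
    using assms unfolding mean_def
    by (subst nn_integral_exp_law) (auto intro!: nn_integral_cong
        simp: exponential_density_def ennreal_mult'[symmetric] ennreal_neg)
  also have "\<dots> = 1 / \<mu>"
    using nn_integral_erlang_ith_moment[OF assms, of 0 1] by simp
  finally show ?thesis .
qed

lemma powr_le_exp:
  fixes k \<mu> x :: real
  assumes k: "k > 0" and \<mu>: "\<mu> > 0" and x: "x \<ge> 0"
  shows "x powr k \<le> (2 * k / \<mu>) powr k * exp (\<mu> * x / 2)"
proof -
  have "\<mu> * x / (2 * k) \<le> exp (\<mu> * x / (2 * k))"
    using exp_ge_add_one_self[of "\<mu> * x / (2 * k)"] by linarith
  then have "(2 * k / \<mu>) powr k * (\<mu> * x / (2 * k)) powr k \<le> (2 * k / \<mu>) powr k * exp (\<mu> * x / (2 * k)) powr k"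
    using k \<mu> x by (intro mult_left_mono powr_mono2) auto
  moreover have "(2 * k / \<mu>) powr k * (\<mu> * x / (2 * k)) powr k = x powr k"
    using k \<mu> x by (simp add: powr_mult[symmetric])
  moreover have "exp (\<mu> * x / (2 * k)) powr k = exp (\<mu> * x / 2)"
    using k by (simp add: powr_def)
  ultimately show ?thesis by simp
qed

context
  fixes k \<mu> :: real
  assumes k: "k > 0" and \<mu>: "\<mu> > 0"
begin

interpretation reset_setting "weibull k" "exp_law \<mu>"
  using is_law_weibull[OF k] is_law_exp_law[OF \<mu>] by unfold_locales

lemma emeasure_completion_exp_ge:
  assumes "b \<ge> 0"
  shows "ennreal ((1 - exp (- (b powr k))) * exp (- b * \<mu>)) \<le> emeasure M {s. fst s \<le> snd s}"
proof -
  have "ennreal ((1 - exp (- (b powr k))) * exp (- b * \<mu>)) = emeasure M ({..ennreal b} \<times> tail_set b)"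
    using assms k \<mu>
    by (simp add: R.emeasure_pair_measure_Times sets_T sets_R emeasure_weibull_atMost
        survival_exp_law[unfolded survival_def] ennreal_mult'[symmetric])
  also have "\<dots> \<le> emeasure M {s. fst s \<le> snd s}"
    using assms by (intro emeasure_mono) (auto simp: tail_set_eq_greaterThan)
  finally show ?thesis .
qed

lemma emeasure_completion_exp_le: "emeasure M {s. fst s \<le> snd s} \<le> ennreal (2 * (2 * k / \<mu>) powr k)"
proof -
  let ?C = "(2 * k / \<mu>) powr k"
  note borel_measurable_survival[OF T, measurable]
  have "emeasure M {s. fst s \<le> snd s} = (\<integral>\<^sup>+r. emeasure (weibull k) {..r} \<partial>exp_law \<mu>)"
    by (subst TR.emeasure_pair_measure_alt2) (auto simp: vimage_def atMost_def)
  also have "\<dots> = (\<integral>\<^sup>+x. ennreal (exponential_density \<mu> x) * emeasure (weibull k) {..ennreal x} \<partial>lborel)"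
  proof (rule nn_integral_exp_law[OF \<mu>])
    have "(\<lambda>r. \<integral>\<^sup>+t. indicator {..r} t \<partial>weibull k) \<in> borel_measurable borel"
      by (rule T.borel_measurable_nn_integral) (simp add: indicator_def)
    then show "(\<lambda>r. emeasure (weibull k) {..r}) \<in> borel_measurable borel"
      by (simp add: sets_T)
  qed
  also have "\<dots> \<le> (\<integral>\<^sup>+x. ennreal ?C * ennreal (2 * exponential_density (\<mu> / 2) x) \<partial>lborel)"
  proof (intro nn_integral_mono)
    fix x :: real
    show "ennreal (exponential_density \<mu> x) * emeasure (weibull k) {..ennreal x}
        \<le> ennreal ?C * ennreal (2 * exponential_density (\<mu> / 2) x)"
    proof (cases "x \<ge> 0")
      case True
      have "1 - exp (- (x powr k)) \<le> ?C * exp (\<mu> * x / 2)"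
        using one_minus_exp_neg_le[of "x powr k"] powr_le_exp[OF k \<mu> True] by linarith
      then have "\<mu> * exp (- x * \<mu>) * (1 - exp (- (x powr k)))
          \<le> \<mu> * exp (- x * \<mu>) * (?C * exp (\<mu> * x / 2))"
        using \<mu> by (intro mult_left_mono) auto
      also have "\<dots> = ?C * (2 * ((\<mu> / 2) * exp (- x * (\<mu> / 2))))"
        by (simp add: mult_exp_exp)
      finally show ?thesis
        using True k \<mu>
        by (simp add: emeasure_weibull_atMost exponential_density_def ennreal_mult'[symmetric] ennreal_leI)
    qed (simp add: exponential_density_def)
  qed
  also have "\<dots> = ennreal ?C * 2"
    using prob_space.emeasure_space_1[OF prob_space_exponential_density[of "\<mu> / 2"]] \<mu>
    by (simp add: nn_integral_cmult ennreal_mult emeasure_density)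
  finally show ?thesis
    by (simp add: ennreal_mult mult.commute)
qed

lemma nn_integral_min_exp_ge:
  assumes "b \<ge> 0"
  shows "ennreal (b * exp (- (b powr k)) * exp (- b * \<mu>)) \<le> (\<integral>\<^sup>+s. min (fst s) (snd s) \<partial>M)"
proof -
  have "ennreal (b * exp (- (b powr k)) * exp (- b * \<mu>)) = ennreal b * emeasure M (tail_set b \<times> tail_set b)"
    using assms k \<mu>
    by (simp add: R.emeasure_pair_measure_Times sets_T sets_R survival_weibull[unfolded survival_def]
        survival_exp_law[unfolded survival_def] ennreal_mult'[symmetric] mult.assoc)
  also have "\<dots> = (\<integral>\<^sup>+s. ennreal b * indicator (tail_set b \<times> tail_set b) s \<partial>M)"
    by (rule nn_integral_cmult_indicator[symmetric]) (simp add: sets_T sets_R)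
  also have "\<dots> \<le> (\<integral>\<^sup>+s. min (fst s) (snd s) \<partial>M)"
    using assms by (intro nn_integral_mono) (auto simp: indicator_def tail_set_eq_greaterThan)
  finally show ?thesis .
qed

lemma nn_integral_min_exp_le: "(\<integral>\<^sup>+s. min (fst s) (snd s) \<partial>M) \<le> ennreal (1 / \<mu>)"
proof -
  have "(\<integral>\<^sup>+s. min (fst s) (snd s) \<partial>M) \<le> (\<integral>\<^sup>+s. snd s \<partial>M)"
    by (intro nn_integral_mono) simp
  also have "\<dots> = (\<integral>\<^sup>+r. \<integral>\<^sup>+t. r \<partial>weibull k \<partial>exp_law \<mu>)"
    by (subst TR.nn_integral_snd[symmetric]) auto
  also have "\<dots> = mean (exp_law \<mu>)"
    by (simp add: T.emeasure_space_1 mean_def)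
  finally show ?thesis using mean_exp_law[OF \<mu>] by simp
qed

lemma mean_reset_exp_ge:
  assumes "1 \<le> \<mu>"
  shows "ennreal (exp (- 2) / (2 * (2 * k) powr k) * \<mu> powr (k - 1)) \<le> mean \<nu>"
proof (rule mean_reset_transform_ge)
  show "0 < emeasure M {s. fst s \<le> snd s}"
    using emeasure_completion_weibull_pos[OF k is_reset_law_exp_law[OF \<mu>]] .
  let ?c = "exp (- 2) / (2 * (2 * k) powr k) * \<mu> powr (k - 1)"
  have "?c * (2 * (2 * k / \<mu>) powr k) = 1 / \<mu> * exp (- 1) * exp (- (1 / \<mu>) * \<mu>)"
    using k \<mu> by (simp add: powr_divide powr_diff exp_minus field_simps power2_eq_square
        flip: exp_add)
  also have "\<dots> \<le> 1 / \<mu> * exp (- ((1 / \<mu>) powr k)) * exp (- (1 / \<mu>) * \<mu>)"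
  proof -
    have "(1 / \<mu>) powr k \<le> 1" using assms k by (intro powr_le1) auto
    then show ?thesis using \<mu> by (intro mult_right_mono mult_left_mono) auto
  qed
  finally have min_ge: "ennreal (?c * (2 * (2 * k / \<mu>) powr k)) \<le> (\<integral>\<^sup>+s. min (fst s) (snd s) \<partial>M)"
    using nn_integral_min_exp_ge[of "1 / \<mu>"] \<mu> by (auto intro: order_trans[OF ennreal_leI])
  have "ennreal ?c * emeasure M {s. fst s \<le> snd s} \<le> ennreal ?c * ennreal (2 * (2 * k / \<mu>) powr k)"
    by (rule mult_left_mono[OF emeasure_completion_exp_le]) simp
  also have "\<dots> = ennreal (?c * (2 * (2 * k / \<mu>) powr k))"
    by (rule ennreal_mult'[symmetric]) simp
  finally show "ennreal ?c * emeasure M {s. fst s \<le> snd s} \<le> (\<integral>\<^sup>+s. min (fst s) (snd s) \<partial>M)"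
    using min_ge by (rule order_trans)
qed

lemma mean_reset_exp_le:
  assumes "k \<le> 1" "1 \<le> \<mu>"
  shows "mean \<nu> \<le> ennreal (2 * exp 1 * \<mu> powr (k - 1))"
proof (rule mean_reset_transform_le)
  show "0 < emeasure M {s. fst s \<le> snd s}"
    using emeasure_completion_weibull_pos[OF k is_reset_law_exp_law[OF \<mu>]] .
  have "mean \<nu> \<le> mean (weibull k)"
    using assms k \<mu> by (intro stoch_le_imp_mean_le is_law_reset_transform T
        reset_transform_weibull_stoch_le is_reset_law_exp_law)
  then show "mean \<nu> < \<infinity>"
    using mean_weibull_finite[OF k] by (rule le_less_trans)
  have "(1 / \<mu>) powr k \<le> 1" using assms k by (intro powr_le1) auto
  moreover have "exp (- (1 / \<mu>) * \<mu>) = exp (- 1)" using \<mu> by simp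
  ultimately have "(1 / \<mu>) powr k / 2 * exp (- 1) \<le> (1 - exp (- ((1 / \<mu>) powr k))) * exp (- (1 / \<mu>) * \<mu>)"
    by (simp only:) (intro mult_right_mono one_minus_exp_neg_ge, auto)
  then have q_ge: "ennreal ((1 / \<mu>) powr k / 2 * exp (- 1)) \<le> emeasure M {s. fst s \<le> snd s}"
    using \<mu> by (intro order_trans[OF ennreal_leI emeasure_completion_exp_ge[of "1 / \<mu>"]]) auto
  have "(\<integral>\<^sup>+s. min (fst s) (snd s) \<partial>M) \<le> ennreal (1 / \<mu>)"
    by (rule nn_integral_min_exp_le)
  also have "1 / \<mu> = 2 * exp 1 * \<mu> powr (k - 1) * ((1 / \<mu>) powr k / 2 * exp (- 1))"
    using k \<mu> by (simp add: powr_divide powr_diff exp_minus field_simps)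
  also have "ennreal \<dots> = ennreal (2 * exp 1 * \<mu> powr (k - 1)) * ennreal ((1 / \<mu>) powr k / 2 * exp (- 1))"
    by (rule ennreal_mult') simp
  also have "\<dots> \<le> ennreal (2 * exp 1 * \<mu> powr (k - 1)) * emeasure M {s. fst s \<le> snd s}"
    by (rule mult_left_mono[OF q_ge]) simp
  finally show "(\<integral>\<^sup>+s. min (fst s) (snd s) \<partial>M) \<le> ennreal (2 * exp 1 * \<mu> powr (k - 1)) * emeasure M {s. fst s \<le> snd s}" .
qed

end

lemma one_over_powr:
  fixes x k :: real
  assumes "0 < x"
  shows "(1 / x) powr (k - 1) = x powr (1 - k)"
proof -
  have "(1 / x) powr (k - 1) = 1 / x powr (k - 1)"
    using assms by (simp add: powr_divide)
  also have "\<dots> = x powr (- (k - 1))"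
    by (rule powr_minus_divide[symmetric])
  finally show ?thesis by simp
qed

lemma weibull_exp_mean_gt:
  assumes "k > 1"
  shows "\<exists>\<mu>>0. mean (weibull k) < mean (reset_transform (weibull k) (exp_law \<mu>))"
proof -
  define c where "c = exp (- 2) / (2 * (2 * k) powr k)"
  have c: "c > 0" using assms by (simp add: c_def)
  obtain B where B: "mean (weibull k) = ennreal B" "0 \<le> B"
    using mean_weibull_finite[of k] assms by (cases "mean (weibull k)") auto
  obtain x where x: "0 < x" "x \<le> 1" "B / c < x powr (1 - k)"
    using assms exists_small_powr_gt[of "1 - k" "B / c"] by auto
  then have "B < c * (1 / x) powr (k - 1)"
    using c by (simp add: one_over_powr field_simps)
  then have "mean (weibull k) < ennreal (c * (1 / x) powr (k - 1))"
    using B by (simp add: ennreal_lessI)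
  also have "\<dots> \<le> mean (reset_transform (weibull k) (exp_law (1 / x)))"
    unfolding c_def using assms x by (intro mean_reset_exp_ge) auto
  finally show ?thesis using x by (intro exI[of _ "1 / x"]) auto
qed

lemma weibull_exp_mean_lt:
  assumes "0 < k" "k < 1"
  shows "\<exists>\<mu>>0. mean (reset_transform (weibull k) (exp_law \<mu>)) < mean (weibull k)"
proof -
  obtain x where x: "0 < x" "x \<le> 1" "x powr (1 - k) < exp (- 1) / (2 * exp 1)"
    using assms exists_small_powr_lt[of "1 - k" "exp (- 1) / (2 * exp 1)"] by auto
  have "mean (reset_transform (weibull k) (exp_law (1 / x))) \<le> ennreal (2 * exp 1 * (1 / x) powr (k - 1))"
    using assms x by (intro mean_reset_exp_le) auto
  also have "\<dots> < ennreal (exp (- 1))"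
    using x by (intro ennreal_lessI) (auto simp: one_over_powr pos_less_divide_eq algebra_simps)
  also have "\<dots> \<le> mean (weibull k)"
    using assms by (intro mean_weibull_ge) auto
  finally show ?thesis using x by (intro exI[of _ "1 / x"]) auto
qed

section \<open>The characterisation\<close>

lemma is_law_reset_transform_weibull:
  "0 < k \<Longrightarrow> is_reset_law R \<Longrightarrow> is_law (reset_transform (weibull k) R)"
  using reset_setting.is_law_reset_transform[of "weibull k" R] is_law_weibull
  by (auto simp: reset_setting_def is_reset_law_def)

lemma reset_transform_weibull_le_iff:
  assumes "k > 0"
  shows
   "(k \<le> 1 \<longleftrightarrow> (\<forall>R. is_reset_law R \<longrightarrow> stoch_le (reset_transform (weibull k) R) (weibull k))) \<and>
    (k \<le> 1 \<longleftrightarrow> (\<forall>r>0. stoch_le (reset_transform (weibull k) (dirac_law r)) (weibull k))) \<and>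
    (k \<le> 1 \<longleftrightarrow> (\<forall>\<mu>>0. stoch_le (reset_transform (weibull k) (exp_law \<mu>)) (weibull k))) \<and>
    (k \<le> 1 \<longleftrightarrow> (\<forall>R. is_reset_law R \<longrightarrow> mean (reset_transform (weibull k) R) \<le> mean (weibull k))) \<and>
    (k \<le> 1 \<longleftrightarrow> (\<forall>r>0. mean (reset_transform (weibull k) (dirac_law r)) \<le> mean (weibull k))) \<and>
    (k \<le> 1 \<longleftrightarrow> (\<forall>\<mu>>0. mean (reset_transform (weibull k) (exp_law \<mu>)) \<le> mean (weibull k)))"
proof -
  have mean_le: "mean (reset_transform (weibull k) R) \<le> mean (weibull k)"
    if "is_reset_law R" "stoch_le (reset_transform (weibull k) R) (weibull k)" for R
    using that assms by (intro stoch_le_imp_mean_le is_law_reset_transform_weibull is_law_weibull)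
  show ?thesis
  proof (cases "k \<le> 1")
    case True
    then show ?thesis
      using assms mean_le reset_transform_weibull_stoch_le is_reset_law_dirac_law is_reset_law_exp_law
      by auto
  next
    case False
    then obtain r \<mu> where "r > 0" "\<not> mean (reset_transform (weibull k) (dirac_law r)) \<le> mean (weibull k)"
      and "\<mu> > 0" "\<not> mean (reset_transform (weibull k) (exp_law \<mu>)) \<le> mean (weibull k)"
      using weibull_dirac_mean_gt weibull_exp_mean_gt by (meson not_le)
    then show ?thesis
      using False mean_le is_reset_law_dirac_law is_reset_law_exp_law by blast
  qed
qed

lemma reset_transform_weibull_ge_iff:
  assumes "k > 0"
  shows
   "(k \<ge> 1 \<longleftrightarrow> (\<forall>R. is_reset_law R \<longrightarrow> stoch_le (weibull k) (reset_transform (weibull k) R))) \<and>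
    (k \<ge> 1 \<longleftrightarrow> (\<forall>r>0. stoch_le (weibull k) (reset_transform (weibull k) (dirac_law r)))) \<and>
    (k \<ge> 1 \<longleftrightarrow> (\<forall>\<mu>>0. stoch_le (weibull k) (reset_transform (weibull k) (exp_law \<mu>)))) \<and>
    (k \<ge> 1 \<longleftrightarrow> (\<forall>R. is_reset_law R \<longrightarrow> mean (reset_transform (weibull k) R) \<ge> mean (weibull k))) \<and>
    (k \<ge> 1 \<longleftrightarrow> (\<forall>r>0. mean (reset_transform (weibull k) (dirac_law r)) \<ge> mean (weibull k))) \<and>
    (k \<ge> 1 \<longleftrightarrow> (\<forall>\<mu>>0. mean (reset_transform (weibull k) (exp_law \<mu>)) \<ge> mean (weibull k)))"
proof -
  have mean_ge: "mean (weibull k) \<le> mean (reset_transform (weibull k) R)"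
    if "is_reset_law R" "stoch_le (weibull k) (reset_transform (weibull k) R)" for R
    using that assms by (intro stoch_le_imp_mean_le is_law_reset_transform_weibull is_law_weibull)
  show ?thesis
  proof (cases "k \<ge> 1")
    case True
    then show ?thesis
      using mean_ge reset_transform_weibull_stoch_ge is_reset_law_dirac_law is_reset_law_exp_law
      by auto
  next
    case False
    then obtain r \<mu> where "r > 0" "\<not> mean (weibull k) \<le> mean (reset_transform (weibull k) (dirac_law r))"
      and "\<mu> > 0" "\<not> mean (weibull k) \<le> mean (reset_transform (weibull k) (exp_law \<mu>))"
      using assms weibull_dirac_mean_lt weibull_exp_mean_lt by (meson not_le)
    then show ?thesis
      using False mean_ge is_reset_law_dirac_law is_reset_law_exp_law by blast
  qed
qed

theorem mainTheorem16:
  fixes k :: real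
  assumes "k > 0"
  shows
   "(k \<le> 1 \<longleftrightarrow> (\<forall>R. is_reset_law R \<longrightarrow> stoch_le (reset_transform (weibull k) R) (weibull k))) \<and>
    (k \<le> 1 \<longleftrightarrow> (\<forall>r>0. stoch_le (reset_transform (weibull k) (dirac_law r)) (weibull k))) \<and>
    (k \<le> 1 \<longleftrightarrow> (\<forall>\<mu>>0. stoch_le (reset_transform (weibull k) (exp_law \<mu>)) (weibull k))) \<and>
    (k \<le> 1 \<longleftrightarrow> (\<forall>R. is_reset_law R \<longrightarrow> mean (reset_transform (weibull k) R) \<le> mean (weibull k))) \<and>
    (k \<le> 1 \<longleftrightarrow> (\<forall>r>0. mean (reset_transform (weibull k) (dirac_law r)) \<le> mean (weibull k))) \<and>
    (k \<le> 1 \<longleftrightarrow> (\<forall>\<mu>>0. mean (reset_transform (weibull k) (exp_law \<mu>)) \<le> mean (weibull k))) \<and>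
    (k \<le> 1 \<longleftrightarrow> Gamma (1 + 2 / k) \<ge> 2 * (Gamma (1 + 1 / k))\<^sup>2) \<and>
    (k \<ge> 1 \<longleftrightarrow> (\<forall>R. is_reset_law R \<longrightarrow> stoch_le (weibull k) (reset_transform (weibull k) R))) \<and>
    (k \<ge> 1 \<longleftrightarrow> (\<forall>r>0. stoch_le (weibull k) (reset_transform (weibull k) (dirac_law r)))) \<and>
    (k \<ge> 1 \<longleftrightarrow> (\<forall>\<mu>>0. stoch_le (weibull k) (reset_transform (weibull k) (exp_law \<mu>)))) \<and>
    (k \<ge> 1 \<longleftrightarrow> (\<forall>R. is_reset_law R \<longrightarrow> mean (reset_transform (weibull k) R) \<ge> mean (weibull k))) \<and>
    (k \<ge> 1 \<longleftrightarrow> (\<forall>r>0. mean (reset_transform (weibull k) (dirac_law r)) \<ge> mean (weibull k))) \<and>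
    (k \<ge> 1 \<longleftrightarrow> (\<forall>\<mu>>0. mean (reset_transform (weibull k) (exp_law \<mu>)) \<ge> mean (weibull k))) \<and>
    (k = 1 \<longleftrightarrow> (\<forall>R. is_reset_law R \<longrightarrow> reset_transform (weibull k) R = weibull k)) \<and>
    (k = 1 \<longleftrightarrow> (\<forall>r>0. reset_transform (weibull k) (dirac_law r) = weibull k)) \<and>
    (k = 1 \<longleftrightarrow> (\<forall>\<mu>>0. reset_transform (weibull k) (exp_law \<mu>) = weibull k)) \<and>
    (k = 1 \<longleftrightarrow> (\<forall>R. is_reset_law R \<longrightarrow> mean (reset_transform (weibull k) R) = mean (weibull k))) \<and>
    (k = 1 \<longleftrightarrow> (\<forall>r>0. mean (reset_transform (weibull k) (dirac_law r)) = mean (weibull k))) \<and>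
    (k = 1 \<longleftrightarrow> (\<forall>\<mu>>0. mean (reset_transform (weibull k) (exp_law \<mu>)) = mean (weibull k)))"
proof -
  have law_eq_iff: "reset_transform (weibull k) R = weibull k \<longleftrightarrow>
      stoch_le (reset_transform (weibull k) R) (weibull k) \<and> stoch_le (weibull k) (reset_transform (weibull k) R)"
    if "is_reset_law R" for R
    using that assms is_law_reset_transform_weibull is_law_weibull
    by (auto simp: stoch_le_iff_survival intro: stoch_le_antisym)
  have "k = 1 \<longleftrightarrow> k \<le> 1 \<and> 1 \<le> k" by auto
  with reset_transform_weibull_le_iff[OF assms] reset_transform_weibull_ge_iff[OF assms]
  show ?thesis
    unfolding Gamma_double_ge_iff[OF assms, symmetric]
    by (simp (no_asm) add: law_eq_iff is_reset_law_dirac_law is_reset_law_exp_law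
        order.eq_iff[of "mean _"] imp_conjR all_conj_distrib) blast
qed

end
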